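(* Consider Scheme 3 below with nonnegative initial data $f_i^0\ge0$ ($i=0,\dots,M$), and fixed $h=1/M$ and $\tau>0$ (no restriction on the ratio $\tau/h^2$). Then the solution is nonnegative and, as $n\to\infty$, $$f_i^n\to0\ \ (i=1,\dots,M-1),\qquad \tfrac h2 f_0^n+\tfrac h2 f_M^n\to P_0,\qquad \tfrac h2 x_Mf_M^n\to E_0,$$ so that $\tfrac h2 f_0^n\to P_0-E_0$ and $\tfrac h2 f_M^n\to E_0$.
   Context: Let $M\ge2$ be an integer, $h=1/M$, $x_i=ih$ ($x_M=1$), $\tau>0$, $D_i=x_i(1-x_i)$, $\gamma=\tau/h^2$. Scheme 3: given $f^n_0,\dots,f^n_M$, the values $f^{n+1}$ satisfy $$\frac{f^{n+1}_i-f^{n}_i}{\tau}-\frac{D_{i+1}f^{n+1}_{i+1}-2D_{i}f^{n+1}_{i}+D_{i-1}f^{n+1}_{i-1}}{h^2}=0\quad(i=1,\dots,M-1),$$ $$f^{n+1}_0=f^{n}_0+2D_1\gamma f^{n+1}_1,\qquad f^{n+1}_M=f^{n}_M+2D_{M-1}\gamma f^{n+1}_{M-1}.$$ Initial discrete probability and expectation: $P_0=\tfrac h2 f_0^0+\tfrac h2 f_M^0+\sum_{i=1}^{M-1}f_i^0h$, $E_0=\tfrac h2 x_Mf_M^0+\sum_{i=1}^{M-1}x_if_i^0h$. *)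

theory Defs
  imports Complex_Main
begin

definition gridx :: "nat \<Rightarrow> nat \<Rightarrow> real" where
  "gridx M i = real i / real M"

definition diffD :: "nat \<Rightarrow> nat \<Rightarrow> real" where
  "diffD M i = gridx M i * (1 - gridx M i)"

definition scheme3 :: "nat \<Rightarrow> real \<Rightarrow> (nat \<Rightarrow> nat \<Rightarrow> real) \<Rightarrow> bool" where
  "scheme3 M \<tau> f \<longleftrightarrow>
     (let h = 1 / real M; \<gamma> = \<tau> / h\<^sup>2 in
      \<forall>n.
        (\<forall>i. 1 \<le> i \<and> i \<le> M - 1 \<longrightarrow>
           (f (Suc n) i - f n i) / \<tau>
           - (diffD M (i + 1) * f (Suc n) (i + 1) - 2 * diffD M i * f (Suc n) i
              + diffD M (i - 1) * f (Suc n) (i - 1)) / h\<^sup>2 = 0)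
      \<and> f (Suc n) 0 = f n 0 + 2 * diffD M 1 * \<gamma> * f (Suc n) 1
      \<and> f (Suc n) M = f n M + 2 * diffD M (M - 1) * \<gamma> * f (Suc n) (M - 1))"

definition P0 :: "nat \<Rightarrow> (nat \<Rightarrow> real) \<Rightarrow> real" where
  "P0 M g = (let h = 1 / real M in
     h / 2 * g 0 + h / 2 * g M + (\<Sum>i = 1..M - 1. g i * h))"

definition E0 :: "nat \<Rightarrow> (nat \<Rightarrow> real) \<Rightarrow> real" where
  "E0 M g = (let h = 1 / real M in
     h / 2 * gridx M M * g M + (\<Sum>i = 1..M - 1. gridx M i * g i * h))"

end

theory Submission
  imports Defs
begin

(* Long-time behaviour of Scheme 3.
   Write c = tau * M^2 = tau/h^2 and g = f (n+1).  The proof has two independent halves.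
   (1) Maximum principle.  At an interior node the scheme can be rewritten as
         f n i = (1 + 2 tau) g i + c D(i+1) (g i - g(i+1)) + c D(i-1) (g i - g(i-1)),
       using that the second difference of D(x) = x(1-x) is -2h^2.  At an interior
       maximiser (minimiser) of g the two flux terms are >= 0 (<= 0), since D >= 0 and
       D vanishes at the two end nodes.  Hence the interior maximum shrinks at least by
       the factor 1/(1+2 tau) per step, and the interior minimum cannot become negative:
       the interior values are nonnegative and tend to zero geometrically; the boundary
       values stay nonnegative because they only receive nonnegative fluxes.
   (2) Conservation.  Summation by parts shows that the discrete probability P0 and
       the discrete expectation E0 are invariant along the scheme.
   Since the interior contributions to P0 and E0 vanish in the limit, the boundary
   masses converge to P0 and E0 of the initial data, which is the theorem. *)

text \<open>The coefficient is nonnegative on the grid; this makes every flux term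
  carry the sign of the corresponding difference of values.\<close>

lemma diffD_nonneg:
  assumes "i \<le> M"
  shows "0 \<le> diffD M i"
proof -
  have "real i / real M \<le> 1" using assms by (cases "M = 0") (auto simp: divide_le_eq_1)
  then show ?thesis by (simp add: diffD_def gridx_def)
qed

text \<open>D vanishes at both end points; this is what decouples the boundary nodes
  from the interior flux balance.\<close>

lemma diffD_0: "diffD M 0 = 0"
  by (simp add: diffD_def gridx_def)

lemma diffD_M: "1 \<le> M \<Longrightarrow> diffD M M = 0"
  by (simp add: diffD_def gridx_def)

text \<open>D is a quadratic with leading coefficient -1, so its second difference is constant.\<close>

lemma diffD_second_difference:
  assumes "1 \<le> M" "1 \<le> i"
  shows "diffD M (i + 1) - 2 * diffD M i + diffD M (i - 1) = - 2 / real M ^ 2"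
  using assms by (simp add: diffD_def gridx_def of_nat_diff field_simps power2_eq_square)

lemma gridx_M: "1 \<le> M \<Longrightarrow> gridx M M = 1"
  by (simp add: gridx_def)

section \<open>Summation by parts for second differences\<close>

text \<open>Zeroth and first moments of a second difference telescope to boundary terms;
  they give the change of P0 and E0 in one step of the scheme.\<close>

lemma sum_second_difference:
  fixes u :: "nat \<Rightarrow> real"
  shows "(\<Sum>i = 1..N. u (i + 1) - 2 * u i + u (i - 1)) = u (N + 1) - u N - u 1 + u 0"
  by (induction N) (auto simp: sum.cl_ivl_Suc)

lemma sum_weighted_second_difference:
  fixes u :: "nat \<Rightarrow> real"
  shows "(\<Sum>i = 1..N. real i * (u (i + 1) - 2 * u i + u (i - 1)))
           = real N * u (N + 1) - real (N + 1) * u N + u 0"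
  by (induction N) (auto simp: sum.cl_ivl_Suc algebra_simps)

lemma scheme3_interior:
  assumes "\<tau> \<noteq> 0" "scheme3 M \<tau> f" "1 \<le> i" "i \<le> M - 1"
  shows "f (Suc n) i - f n i = \<tau> * real M ^ 2 *
           (diffD M (i + 1) * f (Suc n) (i + 1) - 2 * diffD M i * f (Suc n) i
            + diffD M (i - 1) * f (Suc n) (i - 1))"
proof -
  let ?flux = "diffD M (i + 1) * f (Suc n) (i + 1) - 2 * diffD M i * f (Suc n) i
                 + diffD M (i - 1) * f (Suc n) (i - 1)"
  have "(f (Suc n) i - f n i) / \<tau> - ?flux / (1 / real M) ^ 2 = 0"
    using assms(2-4) unfolding scheme3_def Let_def by blast
  then have "(f (Suc n) i - f n i) / \<tau> = ?flux * real M ^ 2"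
    by (simp add: power_one_over)
  then show ?thesis using assms(1) by (simp add: field_simps)
qed

lemma scheme3_boundary:
  assumes "scheme3 M \<tau> f"
  shows "f (Suc n) 0 = f n 0 + 2 * (\<tau> * real M ^ 2) * (diffD M 1 * f (Suc n) 1)"
    and "f (Suc n) M = f n M + 2 * (\<tau> * real M ^ 2) * (diffD M (M - 1) * f (Suc n) (M - 1))"
  using assms unfolding scheme3_def Let_def by (simp_all add: power_one_over mult_ac)

text \<open>The scheme is linear; we use this to derive the minimum principle from the
  maximum principle.\<close>

lemma scheme3_scale:
  assumes "scheme3 M \<tau> f"
  shows "scheme3 M \<tau> (\<lambda>n i. c * f n i)"
proof -
  have lin: "(c * a - c * b) / t - (d1 * (c * x) - 2 * d2 * (c * y) + d3 * (c * z)) / h2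
        = c * ((a - b) / t - (d1 * x - 2 * d2 * y + d3 * z) / h2)"
    for a b x y z d1 d2 d3 h2 t :: real
    by (simp add: algebra_simps diff_divide_distrib add_divide_distrib)
  show ?thesis
    using assms unfolding scheme3_def Let_def lin by (simp add: ring_distribs mult_ac)
qed

section \<open>Discrete maximum principle\<close>

lemma scheme3_flux_form:
  assumes "1 \<le> M" "\<tau> \<noteq> 0" "scheme3 M \<tau> f" "1 \<le> i" "i \<le> M - 1"
  shows "f n i = (1 + 2 * \<tau>) * f (Suc n) i
           + \<tau> * real M ^ 2 * diffD M (i + 1) * (f (Suc n) i - f (Suc n) (i + 1))
           + \<tau> * real M ^ 2 * diffD M (i - 1) * (f (Suc n) i - f (Suc n) (i - 1))"
proof -
  let ?c = "\<tau> * real M ^ 2" and ?g = "f (Suc n)"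
  have "?c * (diffD M (i + 1) - 2 * diffD M i + diffD M (i - 1)) = - 2 * \<tau>"
    using diffD_second_difference[OF assms(1,4)] assms(1) by simp
  then have curv: "?g i * (?c * (diffD M (i + 1) - 2 * diffD M i + diffD M (i - 1)))
                     = ?g i * (- 2 * \<tau>)"
    by simp
  show ?thesis
    using scheme3_interior[OF assms(2-5), of n] curv by (simp add: algebra_simps)
qed

text \<open>At an interior maximiser of the new values both fluxes are nonnegative, so the
  maximum is damped by the factor 1 + 2 tau relative to the old value there.\<close>

lemma scheme3_max_principle:
  assumes "1 \<le> M" "\<tau> > 0" "scheme3 M \<tau> f"
    and k: "k \<in> {1..M - 1}" and max: "\<forall>j \<in> {1..M - 1}. f (Suc n) j \<le> f (Suc n) k"
  shows "(1 + 2 * \<tau>) * f (Suc n) k \<le> f n k"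
proof -
  let ?c = "\<tau> * real M ^ 2" and ?g = "f (Suc n)"
  have flux: "0 \<le> ?c * diffD M j * (?g k - ?g j)" if "j \<le> M" for j
  proof (cases "j \<in> {1..M - 1}")
    case True
    then show ?thesis
      using max \<open>\<tau> > 0\<close> diffD_nonneg[OF that] by simp
  next
    case False
    then have "j = 0 \<or> j = M" using that by auto
    then show ?thesis using diffD_0 diffD_M[OF assms(1)] by auto
  qed
  have "k + 1 \<le> M" "k - 1 \<le> M" using k by auto
  then show ?thesis
    using scheme3_flux_form[OF assms(1) _ assms(3), of k n] flux[of "k + 1"] flux[of "k - 1"]
      k \<open>\<tau> > 0\<close> by auto
qed

text \<open>Applied to the negated solution, the maximum principle becomes a minimum principle.\<close>

lemma scheme3_min_principle:
  assumes "1 \<le> M" "\<tau> > 0" "scheme3 M \<tau> f"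
    and "k \<in> {1..M - 1}" and "\<forall>j \<in> {1..M - 1}. f (Suc n) k \<le> f (Suc n) j"
  shows "f n k \<le> (1 + 2 * \<tau>) * f (Suc n) k"
  using scheme3_max_principle[OF assms(1,2) scheme3_scale[OF assms(3), of "-1"] assms(4)]
    assms(5) by simp

lemma finite_attains_max:
  fixes g :: "'a \<Rightarrow> 'b::linorder"
  assumes "finite A" "A \<noteq> {}"
  obtains k where "k \<in> A" "\<forall>j \<in> A. g j \<le> g k"
proof -
  have "Max (g ` A) \<in> g ` A" using assms by simp
  then obtain k where "k \<in> A" "g k = Max (g ` A)" by (metis imageE)
  then show ?thesis using that assms by simp
qed

text \<open>Minimum principle by induction: the interior minimum of the new values is at least
  the (nonnegative) old value at the minimiser divided by 1 + 2 tau.\<close>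

lemma scheme3_interior_nonneg:
  assumes "2 \<le> M" "\<tau> > 0" "scheme3 M \<tau> f" "\<forall>i \<in> {1..M - 1}. 0 \<le> f 0 i"
  shows "\<forall>i \<in> {1..M - 1}. 0 \<le> f n i"
proof (induction n)
  case 0
  then show ?case using assms(4) .
next
  case (Suc n)
  obtain k where k: "k \<in> {1..M - 1}" and min: "\<forall>j \<in> {1..M - 1}. f (Suc n) k \<le> f (Suc n) j"
  proof (rule finite_attains_max[of "{1..M - 1}" "\<lambda>j. - f (Suc n) j"])
    show "{1..M - 1} \<noteq> {}" using assms(1) by simp
  qed auto
  have "0 \<le> (1 + 2 * \<tau>) * f (Suc n) k"
    using scheme3_min_principle[OF _ assms(2,3) k min] Suc k assms(1) by force
  then have "0 \<le> f (Suc n) k" using assms(2) by (simp add: zero_le_mult_iff)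
  then show ?case using min by force
qed

lemma scheme3_interior_decay:
  assumes "2 \<le> M" "\<tau> > 0" "scheme3 M \<tau> f" "\<forall>i \<in> {1..M - 1}. f 0 i \<le> B"
  shows "\<forall>i \<in> {1..M - 1}. f n i \<le> B / (1 + 2 * \<tau>) ^ n"
proof (induction n)
  case 0
  then show ?case using assms(4) by simp
next
  case (Suc n)
  obtain k where k: "k \<in> {1..M - 1}" and max: "\<forall>j \<in> {1..M - 1}. f (Suc n) j \<le> f (Suc n) k"
  proof (rule finite_attains_max[of "{1..M - 1}" "f (Suc n)"])
    show "{1..M - 1} \<noteq> {}" using assms(1) by simp
  qed auto
  have "(1 + 2 * \<tau>) * f (Suc n) k \<le> B / (1 + 2 * \<tau>) ^ n"
    using scheme3_max_principle[OF _ assms(2,3) k max] Suc k assms(1) by force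
  then have "f (Suc n) k \<le> B / (1 + 2 * \<tau>) ^ n / (1 + 2 * \<tau>)"
    using assms(2) by (subst pos_le_divide_eq) (simp_all add: mult.commute)
  also have "\<dots> = B / (1 + 2 * \<tau>) ^ Suc n"
    by (simp add: divide_divide_eq_left mult.commute)
  finally have "f (Suc n) k \<le> B / (1 + 2 * \<tau>) ^ Suc n" .
  then show ?case using max by force
qed

lemma scheme3_interior_tendsto_zero:
  assumes "2 \<le> M" "\<tau> > 0" "scheme3 M \<tau> f" "\<forall>i \<in> {1..M - 1}. 0 \<le> f 0 i"
    and i: "i \<in> {1..M - 1}"
  shows "(\<lambda>n. f n i) \<longlonglongrightarrow> 0"
proof -
  define B where "B = Max (f 0 ` {1..M - 1})"
  have "\<forall>j \<in> {1..M - 1}. f 0 j \<le> B" by (simp add: B_def)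
  then have upper: "f n i \<le> B / (1 + 2 * \<tau>) ^ n" for n
    using scheme3_interior_decay[OF assms(1-3)] i by blast
  have lower: "0 \<le> f n i" for n
    using scheme3_interior_nonneg[OF assms(1-4)] i by blast
  show ?thesis
  proof (rule tendsto_sandwich)
    show "\<forall>\<^sub>F n in sequentially. 0 \<le> f n i" using lower by simp
    show "\<forall>\<^sub>F n in sequentially. f n i \<le> B / (1 + 2 * \<tau>) ^ n" using upper by simp
    show "(\<lambda>n. 0) \<longlonglongrightarrow> (0::real)" by simp
    show "(\<lambda>n. B / (1 + 2 * \<tau>) ^ n) \<longlonglongrightarrow> 0"
      using assms(2) by (intro LIMSEQ_divide_realpow_zero) simp
  qed
qed

text \<open>The boundary nodes only absorb the nonnegative fluxes leaving the interior.\<close>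

lemma scheme3_boundary_nonneg:
  assumes "2 \<le> M" "\<tau> > 0" "scheme3 M \<tau> f" "\<forall>i \<le> M. 0 \<le> f 0 i"
  shows "0 \<le> f n 0" and "0 \<le> f n M"
proof -
  have "\<forall>i \<in> {1..M - 1}. 0 \<le> f 0 i" using assms(4) by auto
  then have interior: "0 \<le> f n i" if "i \<in> {1..M - 1}" for n i
    using scheme3_interior_nonneg[OF assms(1-3)] that by blast
  have flux: "0 \<le> 2 * (\<tau> * real M ^ 2) * (diffD M j * f (Suc n) j)" if "j \<in> {1..M - 1}" for n j
    using interior[OF that] diffD_nonneg[of j M] that assms(2) by (intro mult_nonneg_nonneg) auto
  show "0 \<le> f n 0"
    by (induction n) (use assms(1,4) flux[of 1] scheme3_boundary(1)[OF assms(3)] in auto)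
  show "0 \<le> f n M"
    by (induction n) (use assms(1,4) flux[of "M - 1"] scheme3_boundary(2)[OF assms(3)] in auto)
qed

section \<open>Conservation of probability and expectation\<close>

text \<open>Summing the interior equations: the zeroth and first moments of the interior
  increment are exactly compensated by the boundary fluxes.\<close>

lemma scheme3_interior_increment_moments:
  assumes "1 \<le> M" "\<tau> \<noteq> 0" "scheme3 M \<tau> f"
  shows "(\<Sum>i = 1..M - 1. f (Suc n) i - f n i)
           = - (\<tau> * real M ^ 2) * (diffD M 1 * f (Suc n) 1 + diffD M (M - 1) * f (Suc n) (M - 1))"
    and "(\<Sum>i = 1..M - 1. real i * (f (Suc n) i - f n i))
           = - (\<tau> * real M ^ 2) * real M * (diffD M (M - 1) * f (Suc n) (M - 1))"
proof -
  let ?c = "\<tau> * real M ^ 2"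
  define u where "u i = diffD M i * f (Suc n) i" for i
  have u_ends: "u 0 = 0" "u M = 0" using diffD_0 diffD_M[OF assms(1)] by (auto simp: u_def)
  have M: "M - 1 + 1 = M" "real (M - 1) = real M - 1" using assms(1) by auto
  have increment: "f (Suc n) i - f n i = ?c * (u (i + 1) - 2 * u i + u (i - 1))"
    if "i \<in> {1..M - 1}" for i
    using scheme3_interior[OF assms(2,3)] that by (simp add: u_def mult_ac)
  have "(\<Sum>i = 1..M - 1. f (Suc n) i - f n i) = ?c * (\<Sum>i = 1..M - 1. u (i + 1) - 2 * u i + u (i - 1))"
    by (simp add: increment sum_distrib_left)
  also have "\<dots> = - ?c * (u 1 + u (M - 1))"
    unfolding sum_second_difference M(1) u_ends by (simp add: algebra_simps)
  finally show "(\<Sum>i = 1..M - 1. f (Suc n) i - f n i)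
           = - ?c * (diffD M 1 * f (Suc n) 1 + diffD M (M - 1) * f (Suc n) (M - 1))"
    by (simp add: u_def)
  have "(\<Sum>i = 1..M - 1. real i * (f (Suc n) i - f n i))
          = ?c * (\<Sum>i = 1..M - 1. real i * (u (i + 1) - 2 * u i + u (i - 1)))"
    by (simp add: increment sum_distrib_left mult_ac)
  also have "\<dots> = - ?c * real M * u (M - 1)"
    unfolding sum_weighted_second_difference M u_ends by (simp add: algebra_simps)
  finally show "(\<Sum>i = 1..M - 1. real i * (f (Suc n) i - f n i))
           = - ?c * real M * (diffD M (M - 1) * f (Suc n) (M - 1))"
    by (simp add: u_def)
qed

text \<open>The boundary gains 2 c D(1) g(1) and 2 c D(M-1) g(M-1) (weight h/2 each), exactly
  what the interior loses (weight h); the same balance holds for the first moment.\<close>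

lemma scheme3_P0_step:
  assumes "1 \<le> M" "\<tau> \<noteq> 0" "scheme3 M \<tau> f"
  shows "P0 M (f (Suc n)) = P0 M (f n)"
proof -
  let ?h = "1 / real M"
  have "P0 M (f (Suc n)) - P0 M (f n) = ?h / 2 * (f (Suc n) 0 - f n 0)
          + ?h / 2 * (f (Suc n) M - f n M) + ?h * (\<Sum>i = 1..M - 1. f (Suc n) i - f n i)"
    unfolding P0_def Let_def
    by (simp add: sum_subtractf sum_distrib_left algebra_simps diff_divide_distrib)
  also have "\<dots> = 0"
    unfolding scheme3_interior_increment_moments(1)[OF assms]
    using scheme3_boundary[OF assms(3), of n] by (simp add: algebra_simps)
  finally show ?thesis by simp
qed

lemma scheme3_E0_step:
  assumes "1 \<le> M" "\<tau> \<noteq> 0" "scheme3 M \<tau> f"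
  shows "E0 M (f (Suc n)) = E0 M (f n)"
proof -
  let ?h = "1 / real M"
  have "E0 M (f (Suc n)) - E0 M (f n) = ?h / 2 * (f (Suc n) M - f n M)
          + ?h / real M * (\<Sum>i = 1..M - 1. real i * (f (Suc n) i - f n i))"
    unfolding E0_def Let_def gridx_def using assms(1)
    by (simp add: sum_subtractf sum_distrib_left algebra_simps diff_divide_distrib)
  also have "\<dots> = 0"
    unfolding scheme3_interior_increment_moments(2)[OF assms]
    using scheme3_boundary(2)[OF assms(3), of n] assms(1) by (simp add: algebra_simps)
  finally show ?thesis by simp
qed

lemma scheme3_invariants:
  assumes "1 \<le> M" "\<tau> \<noteq> 0" "scheme3 M \<tau> f"
  shows "P0 M (f n) = P0 M (f 0)" and "E0 M (f n) = E0 M (f 0)"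
  by (induction n) (simp_all add: scheme3_P0_step[OF assms] scheme3_E0_step[OF assms])

text \<open>Since the interior values vanish in the limit, the invariance of P0 and E0
  forces the boundary masses to converge to the initial probability and expectation.\<close>

lemma scheme3_boundary_limits:
  assumes "2 \<le> M" "\<tau> > 0" "scheme3 M \<tau> f" "\<forall>i \<in> {1..M - 1}. 0 \<le> f 0 i"
  shows "(\<lambda>n. 1 / real M / 2 * f n 0 + 1 / real M / 2 * f n M) \<longlonglongrightarrow> P0 M (f 0)"
    and "(\<lambda>n. 1 / real M / 2 * gridx M M * f n M) \<longlonglongrightarrow> E0 M (f 0)"
proof -
  let ?I = "{1..M - 1}" and ?h = "1 / real M"
  have invariants: "P0 M (f n) = P0 M (f 0)" "E0 M (f n) = E0 M (f 0)" for n
    using scheme3_invariants[of M \<tau> f] assms(1-3) by auto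
  have interior_mass: "(\<lambda>n. \<Sum>i\<in>?I. w i * f n i * ?h) \<longlonglongrightarrow> 0" for w :: "nat \<Rightarrow> real"
    by (intro tendsto_null_sum tendsto_mult_right_zero tendsto_mult_left_zero
        scheme3_interior_tendsto_zero[OF assms])
  have "(\<lambda>n. P0 M (f 0) - (\<Sum>i\<in>?I. 1 * f n i * ?h)) \<longlonglongrightarrow> P0 M (f 0) - 0"
    by (intro tendsto_diff tendsto_const interior_mass)
  moreover have "?h / 2 * f n 0 + ?h / 2 * f n M = P0 M (f 0) - (\<Sum>i\<in>?I. 1 * f n i * ?h)" for n
    using invariants(1)[of n] unfolding P0_def Let_def by simp
  ultimately show "(\<lambda>n. ?h / 2 * f n 0 + ?h / 2 * f n M) \<longlonglongrightarrow> P0 M (f 0)" by simp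
  have "(\<lambda>n. E0 M (f 0) - (\<Sum>i\<in>?I. gridx M i * f n i * ?h)) \<longlonglongrightarrow> E0 M (f 0) - 0"
    by (intro tendsto_diff tendsto_const interior_mass)
  moreover have "?h / 2 * gridx M M * f n M = E0 M (f 0) - (\<Sum>i\<in>?I. gridx M i * f n i * ?h)" for n
    using invariants(2)[of n] unfolding E0_def Let_def by simp
  ultimately show "(\<lambda>n. ?h / 2 * gridx M M * f n M) \<longlonglongrightarrow> E0 M (f 0)" by simp
qed

theorem theorem3:
  fixes M :: nat and \<tau> :: real and f :: "nat \<Rightarrow> nat \<Rightarrow> real"
  assumes "M \<ge> 2" and "\<tau> > 0"
    and "scheme3 M \<tau> f"
    and "\<forall>i \<le> M. f 0 i \<ge> 0"
  shows "(\<forall>n. \<forall>i \<le> M. f n i \<ge> 0)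
    \<and> (\<forall>i. 1 \<le> i \<and> i \<le> M - 1 \<longrightarrow> (\<lambda>n. f n i) \<longlonglongrightarrow> 0)
    \<and> (\<lambda>n. (1 / real M) / 2 * f n 0 + (1 / real M) / 2 * f n M) \<longlonglongrightarrow> P0 M (f 0)
    \<and> (\<lambda>n. (1 / real M) / 2 * gridx M M * f n M) \<longlonglongrightarrow> E0 M (f 0)
    \<and> (\<lambda>n. (1 / real M) / 2 * f n 0) \<longlonglongrightarrow> P0 M (f 0) - E0 M (f 0)
    \<and> (\<lambda>n. (1 / real M) / 2 * f n M) \<longlonglongrightarrow> E0 M (f 0)"
proof -
  let ?h = "1 / real M"
  have init: "\<forall>i \<in> {1..M - 1}. 0 \<le> f 0 i" using assms(4) by auto
  have nonneg: "\<forall>n. \<forall>i \<le> M. 0 \<le> f n i"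
  proof (intro allI impI)
    fix n i assume "i \<le> M"
    then consider "i = 0" | "i = M" | "i \<in> {1..M - 1}" by force
    then show "0 \<le> f n i"
      using scheme3_boundary_nonneg[OF assms] scheme3_interior_nonneg[OF assms(1-3) init]
      by cases auto
  qed
  note mass = scheme3_boundary_limits[OF assms(1-3) init]
  have right: "(\<lambda>n. ?h / 2 * f n M) \<longlonglongrightarrow> E0 M (f 0)"
    using mass(2) gridx_M assms(1) by simp
  have "(\<lambda>n. (?h / 2 * f n 0 + ?h / 2 * f n M) - ?h / 2 * f n M) \<longlonglongrightarrow> P0 M (f 0) - E0 M (f 0)"
    by (intro tendsto_diff mass(1) right)
  then have left: "(\<lambda>n. ?h / 2 * f n 0) \<longlonglongrightarrow> P0 M (f 0) - E0 M (f 0)" by simp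
  show ?thesis
    using nonneg scheme3_interior_tendsto_zero[OF assms(1-3) init] mass left right by auto
qed

end
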